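(* Let $1\le k\le n$, $c\in\mathrm{GRS}(\alpha,u,k)$, $e\in\mathbb{E}^n$ of Hamming weight $t\le\lfloor (n-k)/2\rfloor$, and $r=c+e$. Run the following procedure on $r$: D1–D2: set $A\leftarrow0$, $B\leftarrow\eta$, $C\leftarrow1$, $D\leftarrow -h_{r'}$. D3: if $\deg C+k-1\ge\deg D$, go to D6. D4: set $d\leftarrow\deg D-\deg B$ and $\gamma\leftarrow\mathrm{LC}(D)\mathrm{LC}(B)^{-1}$. D5: if $d\ge0$, set $C\leftarrow C-\gamma x^dA$, $D\leftarrow D-\gamma x^dB$; if $d<0$, simultaneously set $(A,B,C,D)\leftarrow(C,\ D,\ x^{-d}C-\gamma A,\ x^{-d}D-\gamma B)$ (using the old values on the right). Return to D3. D6: output $(u_1P(\alpha_1),\dots,u_nP(\alpha_n))$ where $P=-D/C$. Then the procedure terminates, at termination $C$ divides $D$ in $\mathbb{E}[x]$, $-D/C$ is the polynomial $h_{c'}$ of degree $<k$ with $c=(u_1h_{c'}(\alpha_1),\dots,u_nh_{c'}(\alpha_n))$, and the output equals $c$.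
   Context: $\mathbb{E}$ is a finite field, $\alpha_1,\dots,\alpha_n\in\mathbb{E}$ pairwise distinct, $u_1,\dots,u_n\in\mathbb{E}$ nonzero. $\mathrm{GRS}(\alpha,u,k)=\{(u_1f(\alpha_1),\dots,u_nf(\alpha_n)) : f\in\mathbb{E}[x],\ \deg f<k\}$. For $1\le i\le n$, $\tilde h_i=\prod_{j\ne i}(x-\alpha_j)$, $h_i=\tilde h_i(\alpha_i)^{-1}\tilde h_i$; $h_{r'}=\sum_{i=1}^n r_iu_i^{-1}h_i$ and $\eta=\prod_{i=1}^n(x-\alpha_i)$. $\deg$ is degree in $x$ with $\deg0=-\infty$; $\mathrm{LC}$ denotes leading coefficient. *)

theory Defs
  imports "HOL-Computational_Algebra.Polynomial" "HOL-Library.Extended_Real"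
begin

text \<open>Vectors in E^n are functions nat => 'a, only indices i < n matter.\<close>

definition GRS :: "(nat \<Rightarrow> 'a::field) \<Rightarrow> (nat \<Rightarrow> 'a) \<Rightarrow> nat \<Rightarrow> nat \<Rightarrow> (nat \<Rightarrow> 'a) set" where
  "GRS \<alpha> u n k = {v. \<exists>f. degree f < k \<and> (\<forall>i<n. v i = u i * poly f (\<alpha> i))}"

definition hweight :: "nat \<Rightarrow> (nat \<Rightarrow> 'a::zero) \<Rightarrow> nat" where
  "hweight n e = card {i. i < n \<and> e i \<noteq> 0}"

definition htilde :: "(nat \<Rightarrow> 'a::field) \<Rightarrow> nat \<Rightarrow> nat \<Rightarrow> 'a poly" where
  "htilde \<alpha> n i = (\<Prod>j\<in>{0..<n} - {i}. [:- \<alpha> j, 1:])"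

definition hbasis :: "(nat \<Rightarrow> 'a::field) \<Rightarrow> nat \<Rightarrow> nat \<Rightarrow> 'a poly" where
  "hbasis \<alpha> n i = smult (inverse (poly (htilde \<alpha> n i) (\<alpha> i))) (htilde \<alpha> n i)"

definition hvec :: "(nat \<Rightarrow> 'a::field) \<Rightarrow> (nat \<Rightarrow> 'a) \<Rightarrow> nat \<Rightarrow> (nat \<Rightarrow> 'a) \<Rightarrow> 'a poly" where
  "hvec \<alpha> u n r = (\<Sum>i<n. smult (r i * inverse (u i)) (hbasis \<alpha> n i))"

definition eta :: "(nat \<Rightarrow> 'a::field) \<Rightarrow> nat \<Rightarrow> 'a poly" where
  "eta \<alpha> n = (\<Prod>i<n. [:- \<alpha> i, 1:])"

definition pdeg :: "'a::zero poly \<Rightarrow> ereal" where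
  "pdeg p = (if p = 0 then -\<infinity> else ereal (real (degree p)))"

type_synonym 'a dstate = "'a poly \<times> 'a poly \<times> 'a poly \<times> 'a poly"

definition dinit :: "(nat \<Rightarrow> 'a::field) \<Rightarrow> (nat \<Rightarrow> 'a) \<Rightarrow> nat \<Rightarrow> (nat \<Rightarrow> 'a) \<Rightarrow> 'a dstate" where
  "dinit \<alpha> u n r = (0, eta \<alpha> n, 1, - hvec \<alpha> u n r)"

definition dstop :: "nat \<Rightarrow> 'a::field dstate \<Rightarrow> bool" where
  "dstop k s = (case s of (A, B, C, D) \<Rightarrow> pdeg C + ereal (real k) - 1 \<ge> pdeg D)"

definition dstep :: "'a::field dstate \<Rightarrow> 'a dstate" where
  "dstep s = (case s of (A, B, C, D) \<Rightarrow>
     (let d = int (degree D) - int (degree B);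
          \<gamma> = lead_coeff D * inverse (lead_coeff B)
      in if d \<ge> 0 then
           (A, B, C - smult \<gamma> (monom 1 (nat d) * A), D - smult \<gamma> (monom 1 (nat d) * B))
         else
           (C, D, monom 1 (nat (- d)) * C - smult \<gamma> A, monom 1 (nat (- d)) * D - smult \<gamma> B)))"

definition dstate_at :: "(nat \<Rightarrow> 'a::field) \<Rightarrow> (nat \<Rightarrow> 'a) \<Rightarrow> nat \<Rightarrow> (nat \<Rightarrow> 'a) \<Rightarrow> nat \<Rightarrow> 'a dstate" where
  "dstate_at \<alpha> u n r j = (dstep ^^ j) (dinit \<alpha> u n r)"

end

theory Submission
  imports Defs
begin

(* Write w_i = r_i / u_i, so that w agrees with the message polynomial f on the set G of
   error-free positions. The loop keeps D = -w C and B = -w A at every evaluation point and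
   deg C + deg B = n. Hence D + f C vanishes on G, which has at least n - t points. While the
   loop runs, deg D >= deg C + k > deg (f C), so D + f C is nonzero and deg D >= n - t; this
   keeps deg C = n - deg B <= t across every swap. When the loop stops,
   deg (D + f C) < deg C + k <= t + k <= n - t, which forces D = -f C. The loop terminates
   because deg B + deg D decreases strictly. *)

lemma funpow_reaches_stop:
  fixes f :: "'a \<Rightarrow> 'a" and \<mu> :: "'a \<Rightarrow> nat"
  assumes "P s" and step: "\<And>s. P s \<Longrightarrow> \<not> Q s \<Longrightarrow> P (f s) \<and> \<mu> (f s) < \<mu> s"
  shows "\<exists>m. Q ((f ^^ m) s) \<and> (\<forall>j<m. \<not> Q ((f ^^ j) s)) \<and> (\<forall>j\<le>m. P ((f ^^ j) s))"
  using assms(1)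
proof (induction "\<mu> s" arbitrary: s rule: less_induct)
  case less
  show ?case
  proof (cases "Q s")
    case True
    with less.prems show ?thesis by (intro exI[of _ 0]) auto
  next
    case False
    with step less.prems have "P (f s)" "\<mu> (f s) < \<mu> s" by auto
    with less.hyps obtain m where m: "Q ((f ^^ m) (f s))" "\<forall>j<m. \<not> Q ((f ^^ j) (f s))"
      "\<forall>j\<le>m. P ((f ^^ j) (f s))" by blast
    have shift: "(f ^^ Suc j) s = (f ^^ j) (f s)" for j by (simp only: funpow_Suc_right comp_def)
    show ?thesis
    proof (intro exI[of _ "Suc m"] conjI allI impI)
      show "Q ((f ^^ Suc m) s)" using m(1) shift by metis
      show "\<not> Q ((f ^^ j) s)" if "j < Suc m" for j
        using that m(2) False shift by (cases j) auto
      show "P ((f ^^ j) s)" if "j \<le> Suc m" for j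
        using that m(3) less.prems shift by (cases j) auto
    qed
  qed
qed

lemma degree_diff_eq_left: "degree q < degree p \<Longrightarrow> degree (p - q) = degree p"
  for p q :: "'a::ab_group_add poly"
  using degree_add_eq_left[of "- q" p] by simp

lemma degree_diff_less_if_coeff_eq:
  fixes p q :: "'a::ab_group_add poly"
  assumes "degree p \<le> m" "degree q \<le> m" "coeff p m = coeff q m"
  shows "p - q = 0 \<or> degree (p - q) < m"
proof (rule ccontr)
  assume "\<not> ?thesis"
  then have "p - q \<noteq> 0" "degree (p - q) = m"
    using degree_diff_le[OF assms(1,2)] by auto
  with assms(3) show False by (metis coeff_diff diff_self leading_coeff_0_iff)
qed

lemma card_le_degree_if_vanishes:
  fixes p :: "'a::{comm_ring_1,ring_no_zero_divisors} poly"
  assumes "p \<noteq> 0" "inj_on \<alpha> S" "finite S" "\<forall>i\<in>S. poly p (\<alpha> i) = 0"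
  shows "card S \<le> degree p"
proof -
  have "card S = card (\<alpha> ` S)" using assms(2) by (simp add: card_image)
  also have "\<dots> \<le> card {x. poly p x = 0}"
    using assms poly_roots_finite by (intro card_mono) auto
  also have "\<dots> \<le> degree p" by (rule card_poly_roots_bound[OF assms(1)])
  finally show ?thesis .
qed

lemma poly_htilde_eq_0_iff:
  assumes "inj_on \<alpha> {0..<n}" "i < n" "j < n"
  shows "poly (htilde \<alpha> n i) (\<alpha> j) = 0 \<longleftrightarrow> i \<noteq> j"
proof -
  have "poly (htilde \<alpha> n i) (\<alpha> j) = (\<Prod>l\<in>{0..<n} - {i}. \<alpha> j - \<alpha> l)"
    by (simp add: htilde_def poly_prod)
  also have "\<dots> = 0 \<longleftrightarrow> (\<exists>l\<in>{0..<n} - {i}. \<alpha> j = \<alpha> l)" by simp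
  also have "\<dots> \<longleftrightarrow> i \<noteq> j" using assms by (auto dest: inj_onD)
  finally show ?thesis .
qed

lemma poly_hbasis:
  assumes "inj_on \<alpha> {0..<n}" "i < n" "j < n"
  shows "poly (hbasis \<alpha> n i) (\<alpha> j) = (if i = j then 1 else 0)"
  using poly_htilde_eq_0_iff[OF assms] poly_htilde_eq_0_iff[OF assms(1,2,2)]
  by (auto simp: hbasis_def)

lemma degree_htilde_le: "i < n \<Longrightarrow> degree (htilde \<alpha> n i) \<le> n - 1"
  using degree_prod_sum_le[of "{0..<n} - {i}" "\<lambda>j. [:- \<alpha> j, 1:]"]
  by (simp add: htilde_def o_def)

lemma poly_hvec:
  assumes "inj_on \<alpha> {0..<n}" "j < n"
  shows "poly (hvec \<alpha> u n v) (\<alpha> j) = v j * inverse (u j)"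
proof -
  have "poly (hvec \<alpha> u n v) (\<alpha> j) = (\<Sum>i<n. v i * inverse (u i) * (if i = j then 1 else 0))"
    unfolding hvec_def poly_sum poly_smult
    using poly_hbasis[OF assms(1) _ assms(2)] by (intro sum.cong) auto
  also have "\<dots> = v j * inverse (u j)"
    using assms(2) by (simp add: if_distrib cong: if_cong)
  finally show ?thesis .
qed

lemma degree_hvec_less: "1 \<le> n \<Longrightarrow> degree (hvec \<alpha> u n v) < n"
  using degree_sum_le[of "{..<n}" "\<lambda>i. smult (v i * inverse (u i)) (hbasis \<alpha> n i)" "n - 1"]
    degree_htilde_le[of _ n \<alpha>]
  by (fastforce simp: hvec_def hbasis_def)

lemma hvec_eq_interpolant:
  assumes "inj_on \<alpha> {0..<n}" "\<forall>i<n. u i \<noteq> 0" "degree f < n"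
    and "\<forall>i<n. v i = u i * poly f (\<alpha> i)"
  shows "hvec \<alpha> u n v = f"
proof (rule ccontr)
  assume "hvec \<alpha> u n v \<noteq> f"
  then have "hvec \<alpha> u n v - f \<noteq> 0" by simp
  moreover have "\<forall>i\<in>{0..<n}. poly (hvec \<alpha> u n v - f) (\<alpha> i) = 0"
    using assms poly_hvec[OF assms(1)] by auto
  ultimately have "n \<le> degree (hvec \<alpha> u n v - f)"
    using card_le_degree_if_vanishes[OF _ assms(1)] by fastforce
  moreover have "degree (hvec \<alpha> u n v - f) < n"
    using assms(3) degree_hvec_less[of n] by (intro degree_diff_less) auto
  ultimately show False by simp
qed

lemma eta_neq_0: "eta \<alpha> n \<noteq> 0"
  by (simp add: eta_def)

lemma degree_eta: "degree (eta \<alpha> n) = n"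
  unfolding eta_def by (subst degree_prod_eq_sum_degree) auto

lemma poly_eta_eq_0: "i < n \<Longrightarrow> poly (eta \<alpha> n) (\<alpha> i) = 0"
  by (auto simp: eta_def poly_prod)

lemma dstop_iff:
  "dstop k (A, B, C, D) \<longleftrightarrow> D = 0 \<or> (C \<noteq> 0 \<and> degree D < degree C + k)"
  by (auto simp: dstop_def pdeg_def one_ereal_def)

lemma dstep_reduce:
  fixes A B C D :: "'a::field poly"
  defines "\<gamma> \<equiv> lead_coeff D * inverse (lead_coeff B)" and "d \<equiv> degree D - degree B"
  assumes "degree B \<le> degree D"
  shows "dstep (A, B, C, D) =
    (A, B, C - smult \<gamma> (monom 1 d * A), D - smult \<gamma> (monom 1 d * B))"
  using assms by (simp add: dstep_def Let_def nat_diff_distrib)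

lemma dstep_swap:
  fixes A B C D :: "'a::field poly"
  defines "\<gamma> \<equiv> lead_coeff D * inverse (lead_coeff B)" and "s \<equiv> degree B - degree D"
  assumes "degree D < degree B"
  shows "dstep (A, B, C, D) =
    (C, D, monom 1 s * C - smult \<gamma> A, monom 1 s * D - smult \<gamma> B)"
  using assms by (simp add: dstep_def Let_def nat_diff_distrib)

definition decoder_inv :: "(nat \<Rightarrow> 'a::field) \<Rightarrow> nat \<Rightarrow> nat \<Rightarrow> (nat \<Rightarrow> 'a) \<Rightarrow> 'a dstate \<Rightarrow> bool" where
  "decoder_inv \<alpha> n t w s = (case s of (A, B, C, D) \<Rightarrow>
     B \<noteq> 0 \<and> C \<noteq> 0 \<and> degree C + degree B = n \<and> degree C \<le> t \<and>
     degree A \<le> degree C \<and> (A = 0 \<or> degree A + degree D < n) \<and>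
     (\<forall>i<n. poly D (\<alpha> i) = - w i * poly C (\<alpha> i) \<and> poly B (\<alpha> i) = - w i * poly A (\<alpha> i)))"

definition decoder_measure :: "'a::zero dstate \<Rightarrow> nat" where
  "decoder_measure s = (case s of (A, B, C, D) \<Rightarrow> degree B + degree D + (if D = 0 then 0 else 1))"

lemma decoder_inv_dinit:
  "decoder_inv \<alpha> n t (\<lambda>i. poly (hvec \<alpha> u n r) (\<alpha> i)) (dinit \<alpha> u n r)"
  by (simp add: dinit_def decoder_inv_def eta_neq_0 degree_eta poly_eta_eq_0)

text \<open>\<open>G\<close> plays the role of the error-free positions and \<open>t\<close> of the number of errors.\<close>

locale key_equation_decoding =
  fixes \<alpha> :: "nat \<Rightarrow> 'a::field" and n k t :: nat and w :: "nat \<Rightarrow> 'a" and f :: "'a poly"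
    and G :: "nat set"
  assumes degree_f: "degree f < k" and t_bound: "2 * t + k \<le> n"
    and G_sub: "G \<subseteq> {0..<n}" and inj_G: "inj_on \<alpha> G" and card_G: "n - t \<le> card G"
    and w_on_G: "\<forall>i\<in>G. w i = poly f (\<alpha> i)"
begin

lemma degree_ge_if_vanishes_on_G:
  assumes "p \<noteq> 0" "\<forall>i\<in>G. poly p (\<alpha> i) = 0"
  shows "n - t \<le> degree p"
  using card_le_degree_if_vanishes[OF assms(1) inj_G _ assms(2)] card_G G_sub
  by (meson finite_atLeastLessThan finite_subset le_trans)

lemma key_poly_vanishes_on_G:
  assumes "decoder_inv \<alpha> n t w (A, B, C, D)" "i \<in> G"
  shows "poly (D + f * C) (\<alpha> i) = 0"
  using assms G_sub w_on_G by (auto simp: decoder_inv_def)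

lemma degree_D_if_not_stop:
  assumes inv: "decoder_inv \<alpha> n t w (A, B, C, D)" and "\<not> dstop k (A, B, C, D)"
  shows "D \<noteq> 0" "degree C + k \<le> degree D" "n - t \<le> degree D"
proof -
  have "C \<noteq> 0" using inv by (simp add: decoder_inv_def)
  with assms(2) show "D \<noteq> 0" and deg_D: "degree C + k \<le> degree D"
    by (auto simp: dstop_iff)
  have "degree (f * C) < degree D"
    using degree_mult_le[of f C] degree_f deg_D by linarith
  then have "degree (D + f * C) = degree D" by (rule degree_add_eq_left)
  moreover from this \<open>degree (f * C) < degree D\<close> have "D + f * C \<noteq> 0" by auto
  ultimately show "n - t \<le> degree D"
    using degree_ge_if_vanishes_on_G key_poly_vanishes_on_G[OF inv] by metis
qed

lemma D_eq_if_stop: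
  assumes inv: "decoder_inv \<alpha> n t w (A, B, C, D)" and "dstop k (A, B, C, D)"
  shows "D = - (f * C)"
proof -
  have "C \<noteq> 0" "degree C \<le> t" using inv by (auto simp: decoder_inv_def)
  with assms(2) have "D = 0 \<or> degree D < degree C + k" by (simp add: dstop_iff)
  moreover have "degree (f * C) < degree C + k"
    using degree_mult_le[of f C] degree_f by linarith
  ultimately have "degree (D + f * C) < degree C + k"
    using degree_add_le_max[of D "f * C"] by auto
  with \<open>degree C \<le> t\<close> t_bound have "\<not> n - t \<le> degree (D + f * C)" by linarith
  then have "D + f * C = 0"
    using degree_ge_if_vanishes_on_G key_poly_vanishes_on_G[OF inv] by blast
  then show ?thesis by (simp add: eq_neg_iff_add_eq_0)
qed

lemma decoder_inv_reduce:
  assumes inv: "decoder_inv \<alpha> n t w (A, B, C, D)" and ns: "\<not> dstop k (A, B, C, D)"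
    and le: "degree B \<le> degree D"
  shows "decoder_inv \<alpha> n t w (dstep (A, B, C, D))
    \<and> decoder_measure (dstep (A, B, C, D)) < decoder_measure (A, B, C, D)"
proof -
  from inv have B0: "B \<noteq> 0" and C0: "C \<noteq> 0" and deg_CB: "degree C + degree B = n"
    and deg_A: "degree A \<le> degree C" and deg_AD: "A = 0 \<or> degree A + degree D < n"
    and "degree C \<le> t"
    and interp: "\<forall>i<n. poly D (\<alpha> i) = - w i * poly C (\<alpha> i) \<and> poly B (\<alpha> i) = - w i * poly A (\<alpha> i)"
    by (auto simp: decoder_inv_def)
  have D0: "D \<noteq> 0" using degree_D_if_not_stop[OF inv ns] by simp
  define \<gamma> where "\<gamma> = lead_coeff D * inverse (lead_coeff B)"
  define d where "d = degree D - degree B"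
  define C' where "C' = C - smult \<gamma> (monom 1 d * A)"
  define D' where "D' = D - smult \<gamma> (monom 1 d * B)"
  have step: "dstep (A, B, C, D) = (A, B, C', D')"
    unfolding C'_def D'_def \<gamma>_def d_def using le by (rule dstep_reduce)
  have deg_xB: "degree (monom 1 d * B) = degree D"
    using B0 le by (simp add: degree_mult_eq degree_monom_eq d_def)
  have D': "D' = 0 \<or> degree D' < degree D"
    unfolding D'_def
  proof (rule degree_diff_less_if_coeff_eq)
    show "degree (smult \<gamma> (monom 1 d * B)) \<le> degree D"
      using deg_xB degree_smult_le by metis
    show "coeff D (degree D) = coeff (smult \<gamma> (monom 1 d * B)) (degree D)"
      using B0 le by (simp add: \<gamma>_def d_def coeff_monom_mult)
  qed simp
  have C': "C' \<noteq> 0 \<and> degree C' = degree C"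
  proof (cases "A = 0")
    case True
    with C0 show ?thesis by (simp add: C'_def)
  next
    case False
    \<comment> \<open>the invariant deg A + deg D < n keeps the correction term below deg C\<close>
    with deg_AD deg_CB le have "d + degree A < degree C" by (simp add: d_def)
    moreover have "degree (smult \<gamma> (monom 1 d * A)) \<le> d + degree A"
      by (metis degree_smult_le degree_mult_le degree_monom_le add_le_mono order_trans le_refl)
    ultimately have lt: "degree (smult \<gamma> (monom 1 d * A)) < degree C" by linarith
    then have "degree C' = degree C" unfolding C'_def by (rule degree_diff_eq_left)
    moreover have "C' \<noteq> 0"
      using lt calculation by (auto simp: C'_def)
    ultimately show ?thesis by simp
  qed
  have "decoder_inv \<alpha> n t w (A, B, C', D')"
    unfolding decoder_inv_def prod.case
    using B0 C' deg_CB deg_A deg_AD D' \<open>degree C \<le> t\<close> interp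
    by (auto simp: C'_def D'_def poly_monom algebra_simps)
  moreover have "decoder_measure (A, B, C', D') < decoder_measure (A, B, C, D)"
    using D' D0 by (auto simp: decoder_measure_def)
  ultimately show ?thesis by (simp add: step)
qed

lemma decoder_inv_swap:
  assumes inv: "decoder_inv \<alpha> n t w (A, B, C, D)" and ns: "\<not> dstop k (A, B, C, D)"
    and less: "degree D < degree B"
  shows "decoder_inv \<alpha> n t w (dstep (A, B, C, D))
    \<and> decoder_measure (dstep (A, B, C, D)) < decoder_measure (A, B, C, D)"
proof -
  from inv have B0: "B \<noteq> 0" and C0: "C \<noteq> 0" and deg_CB: "degree C + degree B = n"
    and deg_A: "degree A \<le> degree C"
    and interp: "\<forall>i<n. poly D (\<alpha> i) = - w i * poly C (\<alpha> i) \<and> poly B (\<alpha> i) = - w i * poly A (\<alpha> i)"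
    by (auto simp: decoder_inv_def)
  have D0: "D \<noteq> 0" and deg_D: "n - t \<le> degree D"
    using degree_D_if_not_stop[OF inv ns] by simp_all
  define \<gamma> where "\<gamma> = lead_coeff D * inverse (lead_coeff B)"
  define s where "s = degree B - degree D"
  define C' where "C' = monom 1 s * C - smult \<gamma> A"
  define D' where "D' = monom 1 s * D - smult \<gamma> B"
  have step: "dstep (A, B, C, D) = (C, D, C', D')"
    unfolding C'_def D'_def \<gamma>_def s_def using less by (rule dstep_swap)
  have s0: "0 < s" using less by (simp add: s_def)
  have D': "D' = 0 \<or> degree D' < degree B"
    unfolding D'_def
  proof (rule degree_diff_less_if_coeff_eq)
    show "degree (monom 1 s * D) \<le> degree B"
      using D0 less by (simp add: degree_mult_eq degree_monom_eq s_def)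
    show "coeff (monom 1 s * D) (degree B) = coeff (smult \<gamma> B) (degree B)"
      using B0 less by (simp add: \<gamma>_def s_def coeff_monom_mult)
  qed (rule degree_smult_le)
  have deg_xC: "degree (monom 1 s * C) = s + degree C"
    using C0 by (simp add: degree_mult_eq degree_monom_eq)
  have "degree (smult \<gamma> A) < degree (monom 1 s * C)"
    using deg_A s0 deg_xC degree_smult_le[of \<gamma> A] by linarith
  then have deg_C': "degree C' = s + degree C"
    unfolding C'_def deg_xC[symmetric] by (rule degree_diff_eq_left)
  with s0 have "C' \<noteq> 0" by auto
  \<comment> \<open>deg C' = n - deg D \<le> t, since D + f C has at least n - t roots\<close>
  moreover have "degree C' + degree D = n" "degree C' \<le> t"
    using deg_C' deg_CB less deg_D by (simp_all add: s_def)
  ultimately have "decoder_inv \<alpha> n t w (C, D, C', D')"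
    unfolding decoder_inv_def prod.case
    using D0 deg_C' deg_CB less D' interp
    by (auto simp: C'_def D'_def poly_monom algebra_simps)
  moreover have "decoder_measure (C, D, C', D') < decoder_measure (A, B, C, D)"
    using D' D0 less by (auto simp: decoder_measure_def)
  ultimately show ?thesis by (simp add: step)
qed

lemma decoder_inv_dstep:
  assumes "decoder_inv \<alpha> n t w s" "\<not> dstop k s"
  shows "decoder_inv \<alpha> n t w (dstep s) \<and> decoder_measure (dstep s) < decoder_measure s"
proof -
  obtain A B C D where s: "s = (A, B, C, D)" by (cases s)
  show ?thesis
  proof (cases "degree B \<le> degree D")
    case True
    with decoder_inv_reduce assms show ?thesis unfolding s by blast
  next
    case False
    with decoder_inv_swap assms show ?thesis unfolding s not_le by blast
  qed
qed

lemma decoder_correct: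
  assumes "decoder_inv \<alpha> n t w s"
  shows "\<exists>m A B C D. (dstep ^^ m) s = (A, B, C, D) \<and> dstop k ((dstep ^^ m) s) \<and>
    (\<forall>j<m. \<not> dstop k ((dstep ^^ j) s) \<and> fst (snd ((dstep ^^ j) s)) \<noteq> 0) \<and>
    D = - (f * C) \<and> C \<noteq> 0"
proof -
  obtain m where stop: "dstop k ((dstep ^^ m) s)"
    and run: "\<forall>j<m. \<not> dstop k ((dstep ^^ j) s)"
    and inv: "\<forall>j\<le>m. decoder_inv \<alpha> n t w ((dstep ^^ j) s)"
    using funpow_reaches_stop[OF assms decoder_inv_dstep] by blast
  obtain A B C D where s_m: "(dstep ^^ m) s = (A, B, C, D)" by (cases "(dstep ^^ m) s")
  have B_run: "fst (snd ((dstep ^^ j) s)) \<noteq> 0" if "j < m" for j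
  proof -
    have "decoder_inv \<alpha> n t w ((dstep ^^ j) s)" using inv that by simp
    then show ?thesis by (auto simp: decoder_inv_def split: prod.splits)
  qed
  have "decoder_inv \<alpha> n t w ((dstep ^^ m) s)" using inv by simp
  then have inv_m: "decoder_inv \<alpha> n t w (A, B, C, D)" by (simp only: s_m)
  have "D = - (f * C)"
    using D_eq_if_stop[OF inv_m] stop s_m by simp
  moreover have "C \<noteq> 0"
    using inv_m by (simp add: decoder_inv_def)
  ultimately show ?thesis
    using B_run stop run s_m by blast
qed

end

lemma key_equation_decoding_received_word:
  assumes "inj_on \<alpha> {0..<n}" "\<forall>i<n. u i \<noteq> 0" "k \<le> n"
    and "degree f < k" "\<forall>i<n. c i = u i * poly f (\<alpha> i)"
    and "hweight n e \<le> (n - k) div 2"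
  shows "key_equation_decoding \<alpha> n k (hweight n e)
    (\<lambda>i. poly (hvec \<alpha> u n (\<lambda>i. c i + e i)) (\<alpha> i)) f {i. i < n \<and> e i = 0}"
proof
  show "degree f < k" by fact
  show "2 * hweight n e + k \<le> n" using assms(3,6) by linarith
  show "{i. i < n \<and> e i = 0} \<subseteq> {0..<n}" by auto
  show "inj_on \<alpha> {i. i < n \<and> e i = 0}"
    using assms(1) by (rule inj_on_subset) auto
  have "{i. i < n \<and> e i = 0} = {0..<n} - {i. i < n \<and> e i \<noteq> 0}" by auto
  then show "n - hweight n e \<le> card {i. i < n \<and> e i = 0}"
    by (simp add: hweight_def card_Diff_subset subset_eq)
  show "\<forall>i\<in>{i. i < n \<and> e i = 0}. poly (hvec \<alpha> u n (\<lambda>i. c i + e i)) (\<alpha> i) = poly f (\<alpha> i)"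
    using poly_hvec[OF assms(1)] assms(2,5) by auto
qed

theorem mainTheorem6:
  fixes \<alpha> u c e :: "nat \<Rightarrow> 'a::{field,finite}" and n k :: nat
  assumes "inj_on \<alpha> {0..<n}"
    and "\<forall>i<n. u i \<noteq> 0"
    and "1 \<le> k" and "k \<le> n"
    and "c \<in> GRS \<alpha> u n k"
    and "hweight n e \<le> (n - k) div 2"
    and "r = (\<lambda>i. c i + e i)"
  shows "\<exists>m A B C D.
           dstate_at \<alpha> u n r m = (A, B, C, D) \<and>
           dstop k (dstate_at \<alpha> u n r m) \<and>
           (\<forall>j<m. \<not> dstop k (dstate_at \<alpha> u n r j) \<and> fst (snd (dstate_at \<alpha> u n r j)) \<noteq> 0) \<and>
           C dvd D \<and>
           - (D div C) = hvec \<alpha> u n c \<and>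
           degree (hvec \<alpha> u n c) < k \<and>
           (\<forall>i<n. c i = u i * poly (hvec \<alpha> u n c) (\<alpha> i)) \<and>
           (\<forall>i<n. u i * poly (- (D div C)) (\<alpha> i) = c i)"
proof -
  obtain f where f: "degree f < k" "\<forall>i<n. c i = u i * poly f (\<alpha> i)"
    using assms(5) by (auto simp: GRS_def)
  have hvec_c: "hvec \<alpha> u n c = f"
    using f assms(4) by (intro hvec_eq_interpolant assms(1,2)) auto
  interpret key_equation_decoding \<alpha> n k "hweight n e" "\<lambda>i. poly (hvec \<alpha> u n r) (\<alpha> i)" f
      "{i. i < n \<and> e i = 0}"
    unfolding assms(7) using assms(1,2,4) f assms(6) by (rule key_equation_decoding_received_word)
  obtain m A B C D where run: "dstate_at \<alpha> u n r m = (A, B, C, D)" "dstop k (dstate_at \<alpha> u n r m)"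
    "\<forall>j<m. \<not> dstop k (dstate_at \<alpha> u n r j) \<and> fst (snd (dstate_at \<alpha> u n r j)) \<noteq> 0"
    and "D = - (f * C)" "C \<noteq> 0"
    using decoder_correct[OF decoder_inv_dinit, folded dstate_at_def] by blast
  then have "C dvd D" "- (D div C) = f" by simp_all
  moreover have "\<forall>i<n. u i * poly (- (D div C)) (\<alpha> i) = c i"
    using \<open>- (D div C) = f\<close> f(2) by simp
  ultimately show ?thesis
    using run f unfolding hvec_c by blast
qed

end
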